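(* Let $d\ge1$ and let $G$ be a $d$-regular triangle-free graph on $n$ vertices. Then for every $\lambda>0$, \[ \frac1n\overline\alpha_G(\lambda)\;\le\;\frac{1}{2d}\overline\alpha_{K_{d,d}}(\lambda)=\frac{\lambda(1+\lambda)^{d-1}}{2(1+\lambda)^d-1}, \] with equality only if $G$ is a disjoint union of copies of $K_{d,d}$.
   Context: For a graph $H$ and $\lambda>0$, $P_H(\lambda)=\sum_J\lambda^{|J|}$ summed over all independent sets $J$ of $H$ (including the empty set), and $\overline\alpha_H(\lambda)=\lambda P_H'(\lambda)/P_H(\lambda)$ is the expected size of an independent set drawn from the hard-core model $\Pr[J]=\lambda^{|J|}/P_H(\lambda)$. $K_{d,d}$ is the complete bipartite graph with parts of size $d$. *)

theory Defs
  imports "HOL-Analysis.Analysis"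
begin

definition simple_graph :: "'a set \<Rightarrow> ('a \<Rightarrow> 'a \<Rightarrow> bool) \<Rightarrow> bool" where
  "simple_graph V E \<longleftrightarrow> finite V \<and> (\<forall>u v. E u v \<longrightarrow> u \<in> V \<and> v \<in> V)
     \<and> (\<forall>u v. E u v \<longrightarrow> E v u) \<and> (\<forall>u. \<not> E u u)"

definition regular :: "'a set \<Rightarrow> ('a \<Rightarrow> 'a \<Rightarrow> bool) \<Rightarrow> nat \<Rightarrow> bool" where
  "regular V E d \<longleftrightarrow> (\<forall>v\<in>V. card {u\<in>V. E v u} = d)"

definition triangle_free :: "'a set \<Rightarrow> ('a \<Rightarrow> 'a \<Rightarrow> bool) \<Rightarrow> bool" where
  "triangle_free V E \<longleftrightarrow> \<not> (\<exists>u\<in>V. \<exists>v\<in>V. \<exists>w\<in>V. E u v \<and> E v w \<and> E u w)"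

definition indep_set :: "'a set \<Rightarrow> ('a \<Rightarrow> 'a \<Rightarrow> bool) \<Rightarrow> 'a set \<Rightarrow> bool" where
  "indep_set V E J \<longleftrightarrow> J \<subseteq> V \<and> (\<forall>u\<in>J. \<forall>v\<in>J. \<not> E u v)"

definition indep_poly :: "'a set \<Rightarrow> ('a \<Rightarrow> 'a \<Rightarrow> bool) \<Rightarrow> real \<Rightarrow> real" where
  "indep_poly V E lam = (\<Sum>J\<in>{J. indep_set V E J}. lam ^ card J)"

text \<open>Expected size of a hard-core independent set: lambda P'(lambda) / P(lambda).\<close>
definition occ :: "'a set \<Rightarrow> ('a \<Rightarrow> 'a \<Rightarrow> bool) \<Rightarrow> real \<Rightarrow> real" where
  "occ V E lam = lam * deriv (indep_poly V E) lam / indep_poly V E lam"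

definition Kdd_vertices :: "nat \<Rightarrow> (nat \<times> bool) set" where
  "Kdd_vertices d = {0..<d} \<times> (UNIV :: bool set)"

definition Kdd_edge :: "nat \<Rightarrow> nat \<times> bool \<Rightarrow> nat \<times> bool \<Rightarrow> bool" where
  "Kdd_edge d x y \<longleftrightarrow> x \<in> Kdd_vertices d \<and> y \<in> Kdd_vertices d \<and> snd x \<noteq> snd y"

definition disjoint_union_Kdd :: "'a set \<Rightarrow> ('a \<Rightarrow> 'a \<Rightarrow> bool) \<Rightarrow> nat \<Rightarrow> bool" where
  "disjoint_union_Kdd V E d \<longleftrightarrow>
     (\<exists>(m::nat) (f :: 'a \<Rightarrow> nat \<times> (nat \<times> bool)).
        bij_betw f V ({0..<m} \<times> Kdd_vertices d) \<and>
        (\<forall>u\<in>V. \<forall>v\<in>V. E u v \<longleftrightarrow>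
            fst (f u) = fst (f v) \<and> Kdd_edge d (snd (f u)) (snd (f v))))"

end

theory Submission
  imports Defs
begin

text \<open>Fix a vertex \<open>v\<close> and split an independent set \<open>J\<close> into \<open>T = J - N(v)\<close> and
  \<open>S = J \<inter> N(v)\<close>. As \<open>G\<close> is triangle-free, \<open>N(v)\<close> is independent, so for fixed \<open>T\<close> the part
  \<open>S\<close> ranges over all subsets of the \<open>Y\<close> neighbours of \<open>v\<close> that have no neighbour in \<open>T\<close>.
  Summing over \<open>S\<close> writes the partition function, the weight of \<open>v \<in> J\<close> and the weighted size
  of \<open>J \<inter> N(v)\<close> as sums over \<open>T\<close> of \<open>\<lambda>^|T|\<close> times explicit functions of \<open>Y\<close>.
  Averaging over \<open>v\<close> (by regularity the last one becomes \<open>d\<close> times the occupancy) and comparing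
  the concave function \<open>1 - (1 + \<lambda>)^-y\<close> with its chord on \<open>[0, d]\<close> shows that \<open>occ(G)/n\<close>
  equals the value for \<open>K_{d,d}\<close> minus a nonnegative gap. The gap vanishes only if
  every \<open>Y\<close> is \<open>0\<close> or \<open>d\<close>; taking \<open>T = {w}\<close> shows that then any two neighbourhoods are equal
  or disjoint, which makes \<open>G\<close> a disjoint union of copies of \<open>K_{d,d}\<close>.\<close>

lemma power_ratio_Suc_less:
  fixes q :: real
  assumes "q > 1" "k \<ge> 1"
  shows "(q ^ Suc k - 1) / (real (Suc k) * q ^ Suc k) < (q ^ k - 1) / (real k * q ^ k)"
proof -
  have "q ^ k \<ge> 1 + real k * (q - 1)"
    using Bernoulli_inequality[of "q - 1" k] assms(1) by simp
  then have "q ^ Suc k \<ge> q * (1 + real k * (q - 1))"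
    using assms(1) by simp
  moreover have "q * (1 + real k * (q - 1)) = 1 + real (Suc k) * (q - 1) + real k * (q - 1)\<^sup>2"
    by (simp add: algebra_simps power2_eq_square)
  moreover have "real k * (q - 1)\<^sup>2 > 0"
    using assms by simp
  ultimately have "real k * (q ^ Suc k - 1) < real (Suc k) * (q ^ Suc k - q)"
    by (simp add: algebra_simps)
  then show ?thesis
    using assms by (simp add: divide_simps) (simp add: algebra_simps)
qed

lemma power_ratio_strict_antimono:
  fixes q :: real
  assumes "q > 1" "k \<ge> 1" "k < n"
  shows "(q ^ n - 1) / (real n * q ^ n) < (q ^ k - 1) / (real k * q ^ k)"
proof -
  from assms(3) have "Suc k \<le> n" by simp
  then show ?thesis
  proof (induction n rule: dec_induct)
    case base
    show ?case using power_ratio_Suc_less[OF assms(1,2)] .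
  next
    case (step n)
    then show ?case
      using power_ratio_Suc_less[OF assms(1), of n] assms(2) by simp
  qed
qed

text \<open>Multiplied by \<open>q powr -y\<close>, the gap becomes \<open>(1 - q powr -y) - (y / d) * (1 - q powr -d)\<close>:
  the distance of the concave function \<open>1 - q powr -y\<close> above its chord on \<open>[0, d]\<close>.\<close>
definition chord_gap :: "real \<Rightarrow> nat \<Rightarrow> nat \<Rightarrow> real" where
  "chord_gap q d y = q ^ y - 1 - (1 - 1 / q ^ d) / real d * real y * q ^ y"

lemma chord_gap_pos:
  fixes q :: real
  assumes "q > 1" "0 < y" "y < d"
  shows "chord_gap q d y > 0"
proof -
  have "chord_gap q d y
      = real y * q ^ y * ((q ^ y - 1) / (real y * q ^ y) - (q ^ d - 1) / (real d * q ^ d))"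
    unfolding chord_gap_def using assms by (simp add: field_simps)
  then show ?thesis
    using power_ratio_strict_antimono[of q y d] assms by simp
qed

lemma chord_gap_nonneg:
  fixes q :: real
  assumes "q > 1" "y \<le> d"
  shows "chord_gap q d y \<ge> 0"
proof -
  consider "y = 0" | "y = d" "d > 0" | "0 < y" "y < d"
    using assms(2) by linarith
  then show ?thesis
  proof cases
    case 1
    then show ?thesis by (simp add: chord_gap_def)
  next
    case 2
    have "(1 - 1 / q ^ d) * q ^ d = q ^ d - 1"
      using assms(1) by (simp add: algebra_simps)
    then show ?thesis using 2 by (simp add: chord_gap_def)
  next
    case 3
    then show ?thesis using chord_gap_pos[OF assms(1) 3] by simp
  qed
qed

lemma chord_gap_eq_0_imp:
  fixes q :: real
  assumes "q > 1" "y \<le> d" "chord_gap q d y = 0"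
  shows "y = 0 \<or> y = d"
  using chord_gap_pos[OF assms(1), of y d] assms(2,3) by linarith

lemma deriv_sum_powers:
  fixes x :: real
  assumes "finite \<A>"
  shows "x * deriv (\<lambda>x. \<Sum>S\<in>\<A>. x ^ card S) x = (\<Sum>S\<in>\<A>. real (card S) * x ^ card S)"
proof -
  have "((\<lambda>x. \<Sum>S\<in>\<A>. x ^ card S) has_real_derivative
        (\<Sum>S\<in>\<A>. real (card S) * x ^ (card S - 1))) (at x)"
    by (auto intro!: derivative_eq_intros)
  then have "x * deriv (\<lambda>x. \<Sum>S\<in>\<A>. x ^ card S) x = (\<Sum>S\<in>\<A>. real (card S) * (x * x ^ (card S - 1)))"
    by (simp add: DERIV_imp_deriv sum_distrib_left mult.left_commute)
  also have "\<dots> = (\<Sum>S\<in>\<A>. real (card S) * x ^ card S)"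
  proof (rule sum.cong[OF refl])
    fix S :: "'a set"
    show "real (card S) * (x * x ^ (card S - 1)) = real (card S) * x ^ card S"
      by (cases "card S") simp_all
  qed
  finally show ?thesis .
qed

lemma sum_Pow_power:
  fixes x :: "'b :: comm_semiring_1"
  assumes "finite A"
  shows "(\<Sum>S\<in>Pow A. x ^ card S) = (1 + x) ^ card A"
  using prod_add[OF assms, of "\<lambda>_. x" "\<lambda>_. 1"] by (simp add: add.commute)

lemma sum_Pow_card_power:
  fixes x :: real
  assumes "finite A"
  shows "(\<Sum>S\<in>Pow A. real (card S) * x ^ card S) = real (card A) * x * (1 + x) ^ (card A - 1)"
proof -
  have "((\<lambda>x. (1 + x) ^ card A) has_real_derivative real (card A) * (1 + x) ^ (card A - 1)) (at x)"
    by (auto intro!: derivative_eq_intros)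
  then have "x * deriv (\<lambda>x. \<Sum>S\<in>Pow A. x ^ card S) x = real (card A) * x * (1 + x) ^ (card A - 1)"
    by (simp add: sum_Pow_power[OF assms] DERIV_imp_deriv)
  then show ?thesis
    using deriv_sum_powers[of "Pow A" x] assms by simp
qed

lemma finite_indep_sets: "simple_graph V E \<Longrightarrow> finite {J. indep_set V E J}"
  unfolding simple_graph_def indep_set_def by (auto intro: finite_subset[of _ "Pow V"])

lemma indep_poly_pos:
  assumes "simple_graph V E" "lam > 0"
  shows "indep_poly V E lam > 0"
proof -
  have "{} \<in> {J. indep_set V E J}" by (simp add: indep_set_def)
  then have "indep_poly V E lam = 1 + (\<Sum>J\<in>{J. indep_set V E J} - {{}}. lam ^ card J)"
    unfolding indep_poly_def using finite_indep_sets[OF assms(1)] by (simp add: sum.remove)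
  moreover have "(\<Sum>J\<in>{J. indep_set V E J} - {{}}. lam ^ card J) \<ge> 0"
    using assms(2) by (intro sum_nonneg) simp
  ultimately show ?thesis by simp
qed

lemma occ_eq:
  assumes "simple_graph V E"
  shows "occ V E lam = (\<Sum>J\<in>{J. indep_set V E J}. real (card J) * lam ^ card J) / indep_poly V E lam"
  unfolding occ_def indep_poly_def[abs_def]
  using deriv_sum_powers[OF finite_indep_sets[OF assms]] by simp

lemma indep_sets_Kdd:
  "{J. indep_set (Kdd_vertices d) (Kdd_edge d) J} = Pow ({0..<d} \<times> {True}) \<union> Pow ({0..<d} \<times> {False})"
proof (intro set_eqI iffI)
  fix J assume "J \<in> {J. indep_set (Kdd_vertices d) (Kdd_edge d) J}"
  then have J: "J \<subseteq> {0..<d} \<times> UNIV" "\<And>u v. u \<in> J \<Longrightarrow> v \<in> J \<Longrightarrow> snd u = snd v"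
    unfolding indep_set_def Kdd_edge_def Kdd_vertices_def by auto
  show "J \<in> Pow ({0..<d} \<times> {True}) \<union> Pow ({0..<d} \<times> {False})"
  proof (cases "J = {}")
    case False
    then obtain u where u: "u \<in> J" by blast
    have "J \<subseteq> {0..<d} \<times> {snd u}"
    proof
      fix x assume x: "x \<in> J"
      have "fst x < d" using J(1) x by (auto simp: mem_Times_iff)
      moreover have "snd x = snd u" using J(2) x u by blast
      ultimately show "x \<in> {0..<d} \<times> {snd u}" by (simp add: mem_Times_iff)
    qed
    then show ?thesis by (cases "snd u") auto
  qed simp
next
  fix J assume "J \<in> Pow ({0..<d} \<times> {True}) \<union> Pow ({0..<d} \<times> {False})"
  then obtain b where b: "J \<subseteq> {0..<d} \<times> {b}" by blast
  then have "J \<subseteq> Kdd_vertices d" unfolding Kdd_vertices_def by auto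
  moreover have "snd u = b" if "u \<in> J" for u
    using b that by (auto simp: mem_Times_iff)
  ultimately show "J \<in> {J. indep_set (Kdd_vertices d) (Kdd_edge d) J}"
    unfolding indep_set_def Kdd_edge_def by blast
qed

lemma indep_poly_Kdd: "indep_poly (Kdd_vertices d) (Kdd_edge d) x = 2 * (1 + x) ^ d - 1"
proof -
  let ?L = "{0..<d} \<times> {True}" and ?R = "{0..<d} \<times> {False}"
  have "indep_poly (Kdd_vertices d) (Kdd_edge d) x
      = (\<Sum>J\<in>Pow ?L. x ^ card J) + (\<Sum>J\<in>Pow ?R. x ^ card J) - (\<Sum>J\<in>Pow ?L \<inter> Pow ?R. x ^ card J)"
    unfolding indep_poly_def indep_sets_Kdd by (rule sum_Un) auto
  also have "Pow ?L \<inter> Pow ?R = {{}}" by auto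
  also have "(\<Sum>J\<in>Pow ?L. x ^ card J) = (1 + x) ^ d"
    using sum_Pow_power[of ?L x] by (simp add: card_cartesian_product)
  also have "(\<Sum>J\<in>Pow ?R. x ^ card J) = (1 + x) ^ d"
    using sum_Pow_power[of ?R x] by (simp add: card_cartesian_product)
  finally show ?thesis by simp
qed

lemma occ_Kdd:
  assumes "d \<ge> 1"
  shows "occ (Kdd_vertices d) (Kdd_edge d) x / (2 * real d) = x * (1 + x) ^ (d - 1) / (2 * (1 + x) ^ d - 1)"
proof -
  have "((\<lambda>x::real. 2 * (1 + x) ^ d - 1) has_real_derivative 2 * (real d * (1 + x) ^ (d - 1))) (at x)"
    by (auto intro!: derivative_eq_intros)
  then have "deriv (indep_poly (Kdd_vertices d) (Kdd_edge d)) x = 2 * real d * (1 + x) ^ (d - 1)"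
    unfolding indep_poly_Kdd[abs_def] by (simp add: DERIV_imp_deriv)
  then show ?thesis
    using assms unfolding occ_def indep_poly_Kdd by simp
qed

lemma Kdd_occupancy_pos:
  fixes lam :: real
  assumes "lam > 0"
  shows "lam * (1 + lam) ^ (d - 1) / (2 * (1 + lam) ^ d - 1) > 0"
proof -
  have "(1 + lam) ^ d \<ge> 1" using assms by simp
  then have "2 * (1 + lam) ^ d - 1 > 0" by simp
  then show ?thesis using assms by simp
qed

lemma Kdd_occupancy_inverse:
  fixes lam :: real
  assumes lam: "lam > 0" and d: "d \<ge> 1"
  shows "(1 + lam) / lam * (2 - 1 / (1 + lam) ^ d) * (lam * (1 + lam) ^ (d - 1) / (2 * (1 + lam) ^ d - 1)) = 1"
proof -
  define a where "a = (1 + lam) ^ (d - 1)"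
  have q_pow: "(1 + lam) ^ d = (1 + lam) * a"
    unfolding a_def using d by (simp flip: power_Suc)
  have inverse: "Q / l * (2 - 1 / (Q * b)) * (l * b / (2 * (Q * b) - 1)) = 1"
    if "Q > 0" "b > 0" "l > 0" "2 * (Q * b) - 1 > 0" for Q b l :: real
    using that by (simp add: field_simps)
  have "(1 + lam) ^ d \<ge> 1"
    using lam by simp
  then have "2 * ((1 + lam) * a) - 1 > 0"
    unfolding q_pow by simp
  moreover have "a > 0"
    unfolding a_def using lam by simp
  ultimately show ?thesis
    unfolding q_pow a_def[symmetric] using lam by (intro inverse) auto
qed

lemma disjoint_union_Kdd_empty: "disjoint_union_Kdd {} E d"
  unfolding disjoint_union_Kdd_def by (rule exI[of _ 0]) (simp add: bij_betw_def)

lemma disjoint_union_Kdd_add_component: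
  assumes union: "disjoint_union_Kdd V E d"
    and g: "bij_betw g C (Kdd_vertices d)" "\<forall>x\<in>C. \<forall>z\<in>C. E x z \<longleftrightarrow> Kdd_edge d (g x) (g z)"
    and disj: "C \<inter> V = {}"
    and no_edges: "\<forall>x\<in>C. \<forall>z\<in>V. \<not> E x z \<and> \<not> E z x"
  shows "disjoint_union_Kdd (C \<union> V) E d"
proof -
  obtain m and f :: "'a \<Rightarrow> nat \<times> nat \<times> bool" where f: "bij_betw f V ({0..<m} \<times> Kdd_vertices d)"
    and f_edges: "\<forall>x\<in>V. \<forall>z\<in>V. E x z \<longleftrightarrow> fst (f x) = fst (f z) \<and> Kdd_edge d (snd (f x)) (snd (f z))"
    using union unfolding disjoint_union_Kdd_def by blast
  define h where "h x = (if x \<in> C then (m, g x) else f x)" for x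
  have "bij_betw h C ({m} \<times> Kdd_vertices d)"
  proof -
    have "bij_betw (\<lambda>x. (m, g x)) C ({m} \<times> Kdd_vertices d)"
      using g(1) unfolding bij_betw_def inj_on_def by auto
    then show ?thesis by (rule bij_betw_cong[THEN iffD1, rotated]) (simp add: h_def)
  qed
  moreover have "bij_betw h V ({0..<m} \<times> Kdd_vertices d)"
    using f by (rule bij_betw_cong[THEN iffD1, rotated]) (use disj in \<open>auto simp: h_def\<close>)
  ultimately have "bij_betw h (C \<union> V) ({m} \<times> Kdd_vertices d \<union> {0..<m} \<times> Kdd_vertices d)"
    by (rule bij_betw_combine) auto
  moreover have "{m} \<times> Kdd_vertices d \<union> {0..<m} \<times> Kdd_vertices d = {0..<Suc m} \<times> Kdd_vertices d"
    by auto
  moreover have fst_h: "fst (h x) < m" if "x \<in> V" for x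
    using that disj bij_betw_apply[OF f that] unfolding h_def by auto
  have "E x z \<longleftrightarrow> fst (h x) = fst (h z) \<and> Kdd_edge d (snd (h x)) (snd (h z))"
    if "x \<in> C \<union> V" "z \<in> C \<union> V" for x z
    using that g(2) f_edges no_edges disj fst_h[of x] fst_h[of z] unfolding h_def by (auto split: if_splits)
  ultimately show ?thesis
    unfolding disjoint_union_Kdd_def by metis
qed

lemma complete_bipartite_iso_Kdd:
  assumes "finite A" "finite B" "card A = d" "card B = d" "A \<inter> B = {}"
    and edges: "\<forall>x\<in>A \<union> B. \<forall>z\<in>A \<union> B. E x z \<longleftrightarrow> (x \<in> A \<longleftrightarrow> z \<in> B)"
  shows "\<exists>g. bij_betw g (A \<union> B) (Kdd_vertices d) \<and> (\<forall>x\<in>A \<union> B. \<forall>z\<in>A \<union> B. E x z \<longleftrightarrow> Kdd_edge d (g x) (g z))"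
proof -
  obtain gA where gA: "bij_betw gA A {0..<d}"
    using ex_bij_betw_finite_nat[OF assms(1)] assms(3) by auto
  obtain gB where gB: "bij_betw gB B {0..<d}"
    using ex_bij_betw_finite_nat[OF assms(2)] assms(4) by auto
  define g where "g x = (if x \<in> A then (gA x, True) else (gB x, False))" for x
  have "bij_betw (\<lambda>x. (gA x, True)) A ({0..<d} \<times> {True})"
    using gA unfolding bij_betw_def inj_on_def by auto
  then have bij_A: "bij_betw g A ({0..<d} \<times> {True})"
    by (rule bij_betw_cong[THEN iffD1, rotated]) (simp add: g_def)
  have "bij_betw (\<lambda>x. (gB x, False)) B ({0..<d} \<times> {False})"
    using gB unfolding bij_betw_def inj_on_def by auto
  then have bij_B: "bij_betw g B ({0..<d} \<times> {False})"
    by (rule bij_betw_cong[THEN iffD1, rotated]) (use assms(5) in \<open>auto simp: g_def\<close>)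
  have "{0..<d} \<times> {True} \<union> {0..<d} \<times> {False} = Kdd_vertices d"
    unfolding Kdd_vertices_def by auto
  then have bij: "bij_betw g (A \<union> B) (Kdd_vertices d)"
    using bij_betw_combine[OF bij_A bij_B] by auto
  moreover have "E x z \<longleftrightarrow> Kdd_edge d (g x) (g z)" if "x \<in> A \<union> B" "z \<in> A \<union> B" for x z
    using that edges bij assms(5) unfolding Kdd_edge_def g_def by (auto dest: bij_betw_apply)
  ultimately show ?thesis by blast
qed

lemma nbhds_at_edge:
  fixes V :: "'a set" and E :: "'a \<Rightarrow> 'a \<Rightarrow> bool"
  assumes sym: "\<And>x z. x \<in> V \<Longrightarrow> z \<in> V \<Longrightarrow> E x z \<Longrightarrow> E z x"
    and irrefl: "\<And>x. x \<in> V \<Longrightarrow> \<not> E x x"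
    and nbhds: "\<And>x y. x \<in> V \<Longrightarrow> y \<in> V \<Longrightarrow> {w\<in>V. E x w} \<inter> {w\<in>V. E y w} \<noteq> {}
                  \<Longrightarrow> {w\<in>V. E x w} = {w\<in>V. E y w}"
    and u: "u \<in> V" and v: "v \<in> V" and uv: "E v u"
  shows "\<And>x. x \<in> V \<Longrightarrow> E u x \<Longrightarrow> {w\<in>V. E x w} = {w\<in>V. E v w}"
    and "{w\<in>V. E u w} \<inter> {w\<in>V. E v w} = {}"
proof -
  show "{w\<in>V. E x w} = {w\<in>V. E v w}" if "x \<in> V" "E u x" for x
  proof -
    have "u \<in> {w\<in>V. E x w} \<inter> {w\<in>V. E v w}" using that sym u uv by blast
    then show ?thesis using nbhds[of x v] that(1) v by blast
  qed
  show "{w\<in>V. E u w} \<inter> {w\<in>V. E v w} = {}"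
  proof (rule ccontr)
    assume "{w\<in>V. E u w} \<inter> {w\<in>V. E v w} \<noteq> {}"
    then have "{w\<in>V. E u w} = {w\<in>V. E v w}" using nbhds u v by blast
    then show False using irrefl u uv by blast
  qed
qed

lemma Kdd_component_at_edge:
  fixes V :: "'a set" and E :: "'a \<Rightarrow> 'a \<Rightarrow> bool"
  assumes fin: "finite V" and reg: "regular V E d"
    and sym: "\<And>x z. x \<in> V \<Longrightarrow> z \<in> V \<Longrightarrow> E x z \<Longrightarrow> E z x"
    and irrefl: "\<And>x. x \<in> V \<Longrightarrow> \<not> E x x"
    and nbhds: "\<And>x y. x \<in> V \<Longrightarrow> y \<in> V \<Longrightarrow> {w\<in>V. E x w} \<inter> {w\<in>V. E y w} \<noteq> {}
                  \<Longrightarrow> {w\<in>V. E x w} = {w\<in>V. E y w}"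
    and u: "u \<in> V" and v: "v \<in> V" and uv: "E v u"
  defines "C \<equiv> {w\<in>V. E u w} \<union> {w\<in>V. E v w}"
  shows "\<exists>g. bij_betw g C (Kdd_vertices d) \<and> (\<forall>x\<in>C. \<forall>z\<in>C. E x z \<longleftrightarrow> Kdd_edge d (g x) (g z))"
    and "\<forall>x\<in>C. \<forall>z\<in>V - C. \<not> E x z \<and> \<not> E z x"
    and "v \<in> C" "C \<subseteq> V"
proof -
  define N where "N x = {w\<in>V. E x w}" for x
  define A where "A = N u"
  define B where "B = N v"
  note at_vu = nbhds_at_edge[OF sym irrefl nbhds u v uv]
  note at_uv = nbhds_at_edge[OF sym irrefl nbhds v u sym[OF v u uv]]
  have C: "C = A \<union> B" unfolding C_def A_def B_def N_def ..
  have AV: "A \<subseteq> V" and BV: "B \<subseteq> V" and vA: "v \<in> A"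
    using u v uv sym unfolding A_def B_def N_def by auto
  have N_A: "N x = B" if "x \<in> A" for x
    using at_vu(1) that unfolding A_def B_def N_def by blast
  have N_B: "N x = A" if "x \<in> B" for x
    using at_uv(1) that unfolding A_def B_def N_def by blast
  have disj: "A \<inter> B = {}"
    using at_vu(2) unfolding A_def B_def N_def .
  have E_N: "E x z \<longleftrightarrow> z \<in> N x" if "z \<in> V" for x z
    using that unfolding N_def by blast
  have "\<forall>x\<in>A \<union> B. \<forall>z\<in>A \<union> B. E x z \<longleftrightarrow> (x \<in> A \<longleftrightarrow> z \<in> B)"
  proof (intro ballI)
    fix x z assume x: "x \<in> A \<union> B" and z: "z \<in> A \<union> B"
    then have zV: "z \<in> V" using AV BV by blast
    show "E x z \<longleftrightarrow> (x \<in> A \<longleftrightarrow> z \<in> B)"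
    proof (cases "x \<in> A")
      case True
      then show ?thesis using E_N[OF zV] N_A by simp
    next
      case False
      then have "x \<in> B" using x by blast
      then show ?thesis using E_N[OF zV] N_B False z disj by auto
    qed
  qed
  moreover have "finite A" "finite B"
    using fin AV BV by (auto intro: finite_subset)
  moreover have "card A = d" "card B = d"
    using reg u v unfolding regular_def A_def B_def N_def by auto
  ultimately show "\<exists>g. bij_betw g C (Kdd_vertices d) \<and> (\<forall>x\<in>C. \<forall>z\<in>C. E x z \<longleftrightarrow> Kdd_edge d (g x) (g z))"
    unfolding C using complete_bipartite_iso_Kdd[OF _ _ _ _ disj] by blast
  have closed: "z \<in> C" if "x \<in> C" "z \<in> V" "E x z" for x z
    using that E_N N_A N_B unfolding C by blast
  show "\<forall>x\<in>C. \<forall>z\<in>V - C. \<not> E x z \<and> \<not> E z x"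
    using closed sym AV BV unfolding C by blast
  show "v \<in> C" "C \<subseteq> V"
    using vA AV BV unfolding C by auto
qed

lemma disjoint_union_Kdd_if_nbhds_eq_or_disjoint:
  fixes V :: "'a set" and E :: "'a \<Rightarrow> 'a \<Rightarrow> bool"
  assumes "finite V" "d \<ge> 1" "regular V E d"
    and "\<And>x z. x \<in> V \<Longrightarrow> z \<in> V \<Longrightarrow> E x z \<Longrightarrow> E z x"
    and "\<And>x. x \<in> V \<Longrightarrow> \<not> E x x"
    and "\<And>x y. x \<in> V \<Longrightarrow> y \<in> V \<Longrightarrow> {w\<in>V. E x w} \<inter> {w\<in>V. E y w} \<noteq> {}
           \<Longrightarrow> {w\<in>V. E x w} = {w\<in>V. E y w}"
  shows "disjoint_union_Kdd V E d"
  using assms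
proof (induction "card V" arbitrary: V rule: less_induct)
  case less
  note fin = less.prems(1) and d = less.prems(2) and reg = less.prems(3)
    and sym = less.prems(4) and irrefl = less.prems(5) and nbhds = less.prems(6)
  show ?case
  proof (cases "V = {}")
    case True
    then show ?thesis using disjoint_union_Kdd_empty by simp
  next
    case False
    then obtain v where v: "v \<in> V" by blast
    then have "card {w\<in>V. E v w} \<noteq> 0"
      using reg d unfolding regular_def by auto
    then obtain u where u: "u \<in> V" "E v u"
      by (metis (no_types, lifting) card.empty empty_Collect_eq)
    define C where "C = {w\<in>V. E u w} \<union> {w\<in>V. E v w}"
    note component = Kdd_component_at_edge[OF fin reg sym irrefl nbhds u(1) v u(2), folded C_def]
    obtain g where g: "bij_betw g C (Kdd_vertices d)" "\<forall>x\<in>C. \<forall>z\<in>C. E x z \<longleftrightarrow> Kdd_edge d (g x) (g z)"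
      using component(1) by blast
    have nbhd_rest: "{w\<in>V - C. E x w} = {w\<in>V. E x w}" if "x \<in> V - C" for x
      using that component(2) by blast
    have "disjoint_union_Kdd (V - C) E d"
    proof (rule less.hyps)
      show "card (V - C) < card V"
        using fin component(3) v by (intro psubset_card_mono) auto
      show "regular (V - C) E d"
        using nbhd_rest reg unfolding regular_def by auto
      show "{w\<in>V - C. E x w} \<inter> {w\<in>V - C. E y w} \<noteq> {} \<Longrightarrow> {w\<in>V - C. E x w} = {w\<in>V - C. E y w}"
        if "x \<in> V - C" "y \<in> V - C" for x y
        using that nbhd_rest nbhds by auto
    qed (use fin d sym irrefl in auto)
    moreover have "C \<union> (V - C) = V"
      using component(4) by blast
    ultimately show ?thesis
      using disjoint_union_Kdd_add_component[OF _ g _ component(2)] by auto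
  qed
qed

locale triangle_free_regular_graph =
  fixes V :: "'a set" and E :: "'a \<Rightarrow> 'a \<Rightarrow> bool" and d :: nat
  assumes simple: "simple_graph V E" and regular: "regular V E d" and triangle_free: "triangle_free V E"
begin

definition nbhd :: "'a \<Rightarrow> 'a set" where
  "nbhd v = {u\<in>V. E v u}"

definition outer_indep_sets :: "'a \<Rightarrow> 'a set set" where
  "outer_indep_sets v = {T. indep_set V E T \<and> T \<inter> nbhd v = {}}"

definition uncovered :: "'a \<Rightarrow> 'a set \<Rightarrow> 'a set" where
  "uncovered v T = {u\<in>nbhd v. \<forall>t\<in>T. \<not> E u t}"

lemma finite_V: "finite V"
  using simple unfolding simple_graph_def by blast

lemma edge_in_V: "E u w \<Longrightarrow> u \<in> V \<and> w \<in> V"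
  using simple unfolding simple_graph_def by blast

lemma edge_sym: "E u w \<Longrightarrow> E w u"
  using simple unfolding simple_graph_def by blast

lemma edge_irrefl: "\<not> E u u"
  using simple unfolding simple_graph_def by blast

lemma card_nbhd: "v \<in> V \<Longrightarrow> card (nbhd v) = d"
  using regular unfolding regular_def nbhd_def by blast

lemma finite_nbhd: "finite (nbhd v)"
  using finite_V by (rule rev_finite_subset) (auto simp: nbhd_def)

lemma nbhd_no_edges: "v \<in> V \<Longrightarrow> u \<in> nbhd v \<Longrightarrow> w \<in> nbhd v \<Longrightarrow> \<not> E u w"
  using triangle_free unfolding triangle_free_def nbhd_def by blast

lemma uncovered_subset: "uncovered v T \<subseteq> nbhd v"
  unfolding uncovered_def by blast

lemma finite_uncovered: "finite (uncovered v T)"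
  using finite_nbhd uncovered_subset by (rule rev_finite_subset)

lemma card_uncovered_le: "v \<in> V \<Longrightarrow> card (uncovered v T) \<le> d"
  using card_mono[OF finite_nbhd uncovered_subset] card_nbhd by metis

lemma finite_outer_indep_sets: "finite (outer_indep_sets v)"
  using finite_V by (auto simp: outer_indep_sets_def indep_set_def intro: finite_subset[of _ "Pow V"])

lemma finite_indep_set: "indep_set V E J \<Longrightarrow> finite J"
  using finite_V unfolding indep_set_def by (auto intro: finite_subset)

text \<open>Splitting \<open>J\<close> into its parts outside and inside \<open>N(v)\<close>: since \<open>N(v)\<close> is independent
  (no triangles), any set of neighbours of \<open>v\<close> that are not adjacent to \<open>T\<close> can be added to \<open>T\<close>.\<close>
lemma bij_betw_split_indep_sets:
  assumes v: "v \<in> V"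
  shows "bij_betw (\<lambda>(T, S). T \<union> S) (SIGMA T:outer_indep_sets v. Pow (uncovered v T)) {J. indep_set V E J}"
proof (rule bij_betw_byWitness[where f' = "\<lambda>J. (J - nbhd v, J \<inter> nbhd v)"])
  show "\<forall>p\<in>SIGMA T:outer_indep_sets v. Pow (uncovered v T). (\<lambda>J. (J - nbhd v, J \<inter> nbhd v)) ((\<lambda>(T, S). T \<union> S) p) = p"
    using uncovered_subset unfolding outer_indep_sets_def by fastforce
  show "\<forall>J\<in>{J. indep_set V E J}. (\<lambda>(T, S). T \<union> S) (J - nbhd v, J \<inter> nbhd v) = J"
    by auto
  show "(\<lambda>(T, S). T \<union> S) ` (SIGMA T:outer_indep_sets v. Pow (uncovered v T)) \<subseteq> {J. indep_set V E J}"
  proof clarify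
    fix T S assume T: "T \<in> outer_indep_sets v" and S: "S \<subseteq> uncovered v T"
    have "T \<subseteq> V" and "\<And>x y. x \<in> T \<Longrightarrow> y \<in> T \<Longrightarrow> \<not> E x y"
      using T unfolding outer_indep_sets_def indep_set_def by auto
    moreover have "S \<subseteq> V"
      using S uncovered_subset unfolding nbhd_def by blast
    moreover have "\<And>s t. s \<in> S \<Longrightarrow> t \<in> T \<Longrightarrow> \<not> E s t"
      using S unfolding uncovered_def by blast
    moreover have "\<And>s s'. s \<in> S \<Longrightarrow> s' \<in> S \<Longrightarrow> \<not> E s s'"
      using S uncovered_subset nbhd_no_edges[OF v] by blast
    ultimately show "indep_set V E (T \<union> S)"
      unfolding indep_set_def using edge_sym by blast
  qed
  show "(\<lambda>J. (J - nbhd v, J \<inter> nbhd v)) ` {J. indep_set V E J} \<subseteq> (SIGMA T:outer_indep_sets v. Pow (uncovered v T))"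
    unfolding outer_indep_sets_def uncovered_def indep_set_def by blast
qed

lemma sum_indep_sets_split:
  assumes "v \<in> V"
  shows "(\<Sum>J\<in>{J. indep_set V E J}. h J) = (\<Sum>T\<in>outer_indep_sets v. \<Sum>S\<in>Pow (uncovered v T). h (T \<union> S))"
proof -
  have "(\<Sum>J\<in>{J. indep_set V E J}. h J)
      = (\<Sum>p\<in>(SIGMA T:outer_indep_sets v. Pow (uncovered v T)). h ((\<lambda>(T, S). T \<union> S) p))"
    using sum.reindex_bij_betw[OF bij_betw_split_indep_sets[OF assms], of h] by simp
  also have "\<dots> = (\<Sum>T\<in>outer_indep_sets v. \<Sum>S\<in>Pow (uncovered v T). h (T \<union> S))"
    by (subst sum.Sigma) (auto simp: finite_outer_indep_sets finite_uncovered split_def)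
  finally show ?thesis .
qed

lemma card_Un_uncovered:
  assumes "T \<in> outer_indep_sets v" "S \<subseteq> uncovered v T"
  shows "card (T \<union> S) = card T + card S"
proof (rule card_Un_disjoint)
  show "finite T" using assms(1) finite_indep_set unfolding outer_indep_sets_def by blast
  show "finite S" using assms(2) finite_uncovered by (rule finite_subset)
  show "T \<inter> S = {}" using assms uncovered_subset unfolding outer_indep_sets_def by blast
qed

definition vertex_weight :: "real \<Rightarrow> 'a \<Rightarrow> real" where
  "vertex_weight lam v = (\<Sum>J\<in>{J. indep_set V E J}. if v \<in> J then lam ^ card J else 0)"

definition nbhd_weight :: "real \<Rightarrow> 'a \<Rightarrow> real" where
  "nbhd_weight lam v = (\<Sum>J\<in>{J. indep_set V E J}. real (card (J \<inter> nbhd v)) * lam ^ card J)"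

lemma indep_poly_split:
  assumes "v \<in> V"
  shows "indep_poly V E lam = (\<Sum>T\<in>outer_indep_sets v. lam ^ card T * (1 + lam) ^ card (uncovered v T))"
proof -
  have "indep_poly V E lam = (\<Sum>T\<in>outer_indep_sets v. \<Sum>S\<in>Pow (uncovered v T). lam ^ card T * lam ^ card S)"
    unfolding indep_poly_def sum_indep_sets_split[OF assms]
    by (intro sum.cong refl) (simp add: card_Un_uncovered power_add)
  then show ?thesis
    by (simp add: sum_distrib_left[symmetric] sum_Pow_power finite_uncovered)
qed

lemma nbhd_weight_split:
  assumes "v \<in> V"
  shows "nbhd_weight lam v = (\<Sum>T\<in>outer_indep_sets v.
           lam ^ card T * (real (card (uncovered v T)) * lam * (1 + lam) ^ (card (uncovered v T) - 1)))"
proof -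
  have "(T \<union> S) \<inter> nbhd v = S" if "T \<in> outer_indep_sets v" "S \<subseteq> uncovered v T" for T S
    using that uncovered_subset unfolding outer_indep_sets_def by blast
  then have "nbhd_weight lam v
      = (\<Sum>T\<in>outer_indep_sets v. \<Sum>S\<in>Pow (uncovered v T). lam ^ card T * (real (card S) * lam ^ card S))"
    unfolding nbhd_weight_def sum_indep_sets_split[OF assms]
    by (intro sum.cong refl) (simp add: card_Un_uncovered power_add)
  then show ?thesis
    by (simp add: sum_distrib_left[symmetric] sum_Pow_card_power finite_uncovered)
qed

lemma vertex_weight_split:
  assumes v: "v \<in> V"
  shows "vertex_weight lam v = (\<Sum>T\<in>{T\<in>outer_indep_sets v. v \<in> T}. lam ^ card T)"
proof -
  have "(\<Sum>S\<in>Pow (uncovered v T). if v \<in> T \<union> S then lam ^ card (T \<union> S) else 0)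
      = (if v \<in> T then lam ^ card T else 0)" for T
  proof (cases "v \<in> T")
    case True
    then have "uncovered v T = {}"
      unfolding uncovered_def nbhd_def using edge_sym by blast
    then show ?thesis using True by simp
  next
    case False
    moreover have "v \<notin> S" if "S \<subseteq> uncovered v T" for S
      using that uncovered_subset edge_irrefl unfolding nbhd_def by blast
    ultimately show ?thesis by (simp add: sum.neutral)
  qed
  then have "vertex_weight lam v = (\<Sum>T\<in>outer_indep_sets v. if v \<in> T then lam ^ card T else 0)"
    unfolding vertex_weight_def sum_indep_sets_split[OF v] by simp
  then show ?thesis
    by (simp add: sum.inter_filter[OF finite_outer_indep_sets])
qed

text \<open>Adding \<open>v\<close> is a bijection from the sets in \<open>outer_indep_sets v\<close> avoiding \<open>v\<close> to those
  containing it.\<close>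
lemma vertex_weight_eq:
  assumes v: "v \<in> V"
  shows "(1 + lam) * vertex_weight lam v = lam * (\<Sum>T\<in>outer_indep_sets v. lam ^ card T)"
proof -
  let ?In = "{T\<in>outer_indep_sets v. v \<in> T}" and ?Out = "{T\<in>outer_indep_sets v. v \<notin> T}"
  have "bij_betw (insert v) ?Out ?In"
  proof (rule bij_betw_byWitness[where f' = "\<lambda>T. T - {v}"])
    show "insert v ` ?Out \<subseteq> ?In"
    proof
      fix p assume "p \<in> insert v ` ?Out"
      then obtain T where T: "T \<in> outer_indep_sets v" and p: "p = insert v T" by blast
      have "\<not> E v t" if "t \<in> T" for t
        using T that edge_in_V unfolding outer_indep_sets_def nbhd_def by blast
      then have "insert v T \<in> outer_indep_sets v"
        using T v edge_irrefl edge_sym unfolding outer_indep_sets_def indep_set_def nbhd_def by blast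
      then show "p \<in> ?In" using p by blast
    qed
    show "(\<lambda>T. T - {v}) ` ?In \<subseteq> ?Out"
      unfolding outer_indep_sets_def indep_set_def by blast
  qed auto
  then have "(\<Sum>T\<in>?In. lam ^ card T) = (\<Sum>T\<in>?Out. lam ^ card (insert v T))"
    using sum.reindex_bij_betw[of "insert v" ?Out ?In "\<lambda>T. lam ^ card T"] by simp
  also have "\<dots> = lam * (\<Sum>T\<in>?Out. lam ^ card T)"
    unfolding sum_distrib_left
  proof (rule sum.cong[OF refl])
    fix T assume "T \<in> ?Out"
    then have "finite T" "v \<notin> T"
      using finite_indep_set unfolding outer_indep_sets_def by auto
    then show "lam ^ card (insert v T) = lam * lam ^ card T" by simp
  qed
  finally have "(\<Sum>T\<in>?In. lam ^ card T) = lam * (\<Sum>T\<in>?Out. lam ^ card T)" .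
  moreover have "(\<Sum>T\<in>?In \<union> ?Out. lam ^ card T) = (\<Sum>T\<in>?In. lam ^ card T) + (\<Sum>T\<in>?Out. lam ^ card T)"
    by (rule sum.union_disjoint) (use finite_outer_indep_sets in auto)
  moreover have "?In \<union> ?Out = outer_indep_sets v" by blast
  ultimately show ?thesis
    unfolding vertex_weight_split[OF v] by (simp add: algebra_simps)
qed

definition local_gap :: "real \<Rightarrow> 'a \<Rightarrow> real" where
  "local_gap lam v = (\<Sum>T\<in>outer_indep_sets v. lam ^ card T * chord_gap (1 + lam) d (card (uncovered v T)))"

lemma local_gap_nonneg:
  assumes "v \<in> V" "lam > 0"
  shows "local_gap lam v \<ge> 0"
  unfolding local_gap_def
  using assms chord_gap_nonneg card_uncovered_le by (intro sum_nonneg mult_nonneg_nonneg) auto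

lemma local_gap_eq:
  assumes v: "v \<in> V" and lam: "lam > 0"
  shows "local_gap lam v = indep_poly V E lam - (1 + lam) / lam * vertex_weight lam v
           - (1 - 1 / (1 + lam) ^ d) / real d * ((1 + lam) / lam * nbhd_weight lam v)"
proof -
  define q where "q = 1 + lam"
  define c where "c = (1 - 1 / q ^ d) / real d"
  let ?Y = "\<lambda>T. card (uncovered v T)"
  have "local_gap lam v = (\<Sum>T\<in>outer_indep_sets v.
      lam ^ card T * q ^ ?Y T - lam ^ card T - c * (lam ^ card T * (real (?Y T) * q ^ ?Y T)))"
    unfolding local_gap_def chord_gap_def q_def c_def
    by (rule sum.cong[OF refl]) (simp add: algebra_simps)
  then have "local_gap lam v = (\<Sum>T\<in>outer_indep_sets v. lam ^ card T * q ^ ?Y T)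
      - (\<Sum>T\<in>outer_indep_sets v. lam ^ card T)
      - c * (\<Sum>T\<in>outer_indep_sets v. lam ^ card T * (real (?Y T) * q ^ ?Y T))"
    by (simp add: sum_subtractf sum_distrib_left)
  moreover have "lam ^ card T * (real (?Y T) * q ^ ?Y T)
      = q / lam * (lam ^ card T * (real (?Y T) * lam * (1 + lam) ^ (?Y T - 1)))" for T
    using lam unfolding q_def by (cases "?Y T") (simp_all add: field_simps)
  then have "(\<Sum>T\<in>outer_indep_sets v. lam ^ card T * (real (?Y T) * q ^ ?Y T)) = q / lam * nbhd_weight lam v"
    unfolding nbhd_weight_split[OF v] by (simp add: sum_distrib_left)
  moreover have "(\<Sum>T\<in>outer_indep_sets v. lam ^ card T) = q / lam * vertex_weight lam v"
    using vertex_weight_eq[OF v, of lam] lam unfolding q_def by (simp add: field_simps)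
  ultimately show ?thesis
    unfolding indep_poly_split[OF v] q_def c_def by simp
qed

lemma sum_vertex_weight:
  "(\<Sum>v\<in>V. vertex_weight lam v) = (\<Sum>J\<in>{J. indep_set V E J}. real (card J) * lam ^ card J)"
proof -
  have "(\<Sum>v\<in>V. vertex_weight lam v) = (\<Sum>J\<in>{J. indep_set V E J}. \<Sum>v\<in>V. if v \<in> J then lam ^ card J else 0)"
    unfolding vertex_weight_def by (rule sum.swap)
  also have "\<dots> = (\<Sum>J\<in>{J. indep_set V E J}. real (card J) * lam ^ card J)"
  proof (rule sum.cong[OF refl])
    fix J assume "J \<in> {J. indep_set V E J}"
    then have "V \<inter> J = J" unfolding indep_set_def by blast
    then show "(\<Sum>v\<in>V. if v \<in> J then lam ^ card J else 0) = real (card J) * lam ^ card J"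
      by (simp add: sum.inter_restrict[OF finite_V, symmetric])
  qed
  finally show ?thesis .
qed

lemma sum_card_inter_nbhd:
  assumes J: "J \<subseteq> V"
  shows "(\<Sum>v\<in>V. card (J \<inter> nbhd v)) = d * card J"
proof -
  have fin: "finite J" using J finite_V by (rule finite_subset)
  have "(\<Sum>v\<in>V. card (J \<inter> nbhd v)) = (\<Sum>v\<in>V. \<Sum>u\<in>J. of_bool (E v u))"
  proof (rule sum.cong[OF refl])
    fix v
    have "J \<inter> nbhd v = J \<inter> {u. E v u}" using J unfolding nbhd_def by blast
    then show "card (J \<inter> nbhd v) = (\<Sum>u\<in>J. of_bool (E v u))" using fin by simp
  qed
  also have "\<dots> = (\<Sum>u\<in>J. \<Sum>v\<in>V. of_bool (E v u))"
    by (rule sum.swap)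
  also have "\<dots> = (\<Sum>u\<in>J. card (nbhd u))"
  proof (rule sum.cong[OF refl])
    fix u
    have "V \<inter> {v. E v u} = nbhd u" unfolding nbhd_def using edge_sym by blast
    then show "(\<Sum>v\<in>V. of_bool (E v u)) = card (nbhd u)" using finite_V by simp
  qed
  also have "\<dots> = d * card J"
    using J card_nbhd by (simp add: subset_iff)
  finally show ?thesis .
qed

lemma sum_nbhd_weight:
  "(\<Sum>v\<in>V. nbhd_weight lam v) = real d * (\<Sum>J\<in>{J. indep_set V E J}. real (card J) * lam ^ card J)"
proof -
  have "(\<Sum>v\<in>V. nbhd_weight lam v) = (\<Sum>J\<in>{J. indep_set V E J}. \<Sum>v\<in>V. real (card (J \<inter> nbhd v)) * lam ^ card J)"
    unfolding nbhd_weight_def by (rule sum.swap)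
  also have "\<dots> = (\<Sum>J\<in>{J. indep_set V E J}. real d * (real (card J) * lam ^ card J))"
  proof (rule sum.cong[OF refl])
    fix J assume "J \<in> {J. indep_set V E J}"
    then have "J \<subseteq> V" unfolding indep_set_def by blast
    then show "(\<Sum>v\<in>V. real (card (J \<inter> nbhd v)) * lam ^ card J) = real d * (real (card J) * lam ^ card J)"
      using sum_card_inter_nbhd[of J] by (simp flip: sum_distrib_right of_nat_sum)
  qed
  finally show ?thesis by (simp add: sum_distrib_left)
qed

lemma occupancy_identity:
  assumes lam: "lam > 0" and d: "d \<ge> 1"
  shows "(1 + lam) / lam * (2 - 1 / (1 + lam) ^ d) * (\<Sum>J\<in>{J. indep_set V E J}. real (card J) * lam ^ card J)
       = real (card V) * indep_poly V E lam - (\<Sum>v\<in>V. local_gap lam v)"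
proof -
  let ?W = "\<Sum>J\<in>{J. indep_set V E J}. real (card J) * lam ^ card J"
  define c where "c = (1 - 1 / (1 + lam) ^ d) / real d"
  have "(\<Sum>v\<in>V. local_gap lam v) = (\<Sum>v\<in>V. indep_poly V E lam - (1 + lam) / lam * vertex_weight lam v
           - c * ((1 + lam) / lam * nbhd_weight lam v))"
    by (rule sum.cong[OF refl]) (simp add: local_gap_eq lam c_def)
  also have "\<dots> = real (card V) * indep_poly V E lam - (1 + lam) / lam * (\<Sum>v\<in>V. vertex_weight lam v)
      - c * ((1 + lam) / lam * (\<Sum>v\<in>V. nbhd_weight lam v))"
    by (simp add: sum_subtractf sum_distrib_left)
  also have "\<dots> = real (card V) * indep_poly V E lam - (1 + lam) / lam * ?W - (c * real d) * ((1 + lam) / lam * ?W)"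
    unfolding sum_vertex_weight sum_nbhd_weight by (simp add: algebra_simps)
  also have "c * real d = 1 - 1 / (1 + lam) ^ d"
    unfolding c_def using d by simp
  finally have "(\<Sum>v\<in>V. local_gap lam v) = real (card V) * indep_poly V E lam - (1 + lam) / lam * ?W
      - (1 - 1 / (1 + lam) ^ d) * ((1 + lam) / lam * ?W)" .
  moreover have regroup: "a * (2 - x) * w = a * w + (1 - x) * (a * w)" for a x w :: real
    by algebra
  ultimately show ?thesis
    using regroup[of "(1 + lam) / lam" "1 / (1 + lam) ^ d" ?W] by linarith
qed

lemma occ_eq_Kdd_bound_minus_gap:
  assumes lam: "lam > 0" and d: "d \<ge> 1"
  shows "occ V E lam = lam * (1 + lam) ^ (d - 1) / (2 * (1 + lam) ^ d - 1)
           * (real (card V) - (\<Sum>v\<in>V. local_gap lam v) / indep_poly V E lam)"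
proof -
  define K where "K = lam * (1 + lam) ^ (d - 1) / (2 * (1 + lam) ^ d - 1)"
  let ?W = "\<Sum>J\<in>{J. indep_set V E J}. real (card J) * lam ^ card J"
  let ?P = "indep_poly V E lam"
  have "K * (real (card V) * ?P - (\<Sum>v\<in>V. local_gap lam v)) = K * ((1 + lam) / lam * (2 - 1 / (1 + lam) ^ d) * ?W)"
    by (simp only: occupancy_identity[OF lam d])
  also have "\<dots> = ((1 + lam) / lam * (2 - 1 / (1 + lam) ^ d) * K) * ?W"
    by (simp only: mult_ac)
  also have "\<dots> = ?W"
    unfolding K_def Kdd_occupancy_inverse[OF lam d] by simp
  finally have "?W = K * (real (card V) * ?P - (\<Sum>v\<in>V. local_gap lam v))" ..
  moreover have "?P > 0"
    using indep_poly_pos[OF simple lam] .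
  moreover have "K * (n * P - s) / P = K * (n - s / P)" if "P > 0" for n P s :: real
    using that by (simp add: field_simps)
  ultimately show ?thesis
    unfolding occ_eq[OF simple] K_def[symmetric] by simp
qed

lemma card_uncovered_eq_0_or_d:
  assumes "v \<in> V" "lam > 0" "local_gap lam v = 0" "T \<in> outer_indep_sets v"
  shows "card (uncovered v T) = 0 \<or> card (uncovered v T) = d"
proof -
  have "\<forall>T\<in>outer_indep_sets v. lam ^ card T * chord_gap (1 + lam) d (card (uncovered v T)) = 0"
    using assms(3) unfolding local_gap_def
    by (subst sum_nonneg_eq_0_iff[OF finite_outer_indep_sets, symmetric])
       (use assms(1,2) chord_gap_nonneg card_uncovered_le in auto)
  then have "chord_gap (1 + lam) d (card (uncovered v T)) = 0"
    using assms(2,4) by simp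
  then show ?thesis
    using chord_gap_eq_0_imp[of "1 + lam" "card (uncovered v T)" d] card_uncovered_le[OF assms(1), of T] assms(2)
    by simp
qed

text \<open>Test the dichotomy on the outer set \<open>{w}\<close>: all of \<open>N(v)\<close> is adjacent to \<open>w\<close>, or none of it is.\<close>
lemma nbhd_eq_if_card_uncovered_eq_0_or_d:
  assumes cases: "\<And>T. T \<in> outer_indep_sets v \<Longrightarrow> card (uncovered v T) = 0 \<or> card (uncovered v T) = d"
    and v: "v \<in> V" and w: "w \<in> V" and meet: "nbhd v \<inter> nbhd w \<noteq> {}"
  shows "nbhd v = nbhd w"
proof (cases "E v w")
  case True
  obtain u where "u \<in> nbhd v" "u \<in> nbhd w" using meet by blast
  then show ?thesis
    using True triangle_free v w edge_sym unfolding triangle_free_def nbhd_def by blast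
next
  case False
  have "{w} \<in> outer_indep_sets v"
    unfolding outer_indep_sets_def indep_set_def nbhd_def using w False edge_irrefl by auto
  moreover have uncovered_w: "uncovered v {w} = {u\<in>nbhd v. \<not> E u w}"
    unfolding uncovered_def by simp
  ultimately consider "uncovered v {w} = {}" | "uncovered v {w} = nbhd v"
    using cases card_subset_eq[OF finite_nbhd uncovered_subset] card_nbhd[OF v] finite_uncovered
    by (metis card_0_eq)
  then show ?thesis
  proof cases
    case 1
    then have "nbhd v \<subseteq> nbhd w"
      unfolding uncovered_w nbhd_def using edge_sym by blast
    then show ?thesis
      using card_subset_eq[OF finite_nbhd] card_nbhd v w by metis
  next
    case 2
    then have "nbhd v \<inter> nbhd w = {}"
      unfolding uncovered_w nbhd_def using edge_sym by blast
    then show ?thesis using meet by blast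
  qed
qed

lemma disjoint_union_Kdd_if_gap_eq_0:
  assumes lam: "lam > 0" and d: "d \<ge> 1" and gap: "(\<Sum>v\<in>V. local_gap lam v) = 0"
  shows "disjoint_union_Kdd V E d"
proof (rule disjoint_union_Kdd_if_nbhds_eq_or_disjoint[OF finite_V d regular])
  have "\<forall>v\<in>V. local_gap lam v = 0"
    using gap sum_nonneg_eq_0_iff[OF finite_V] local_gap_nonneg lam by blast
  then show "{u\<in>V. E v u} = {u\<in>V. E w u}"
    if "v \<in> V" "w \<in> V" "{u\<in>V. E v u} \<inter> {u\<in>V. E w u} \<noteq> {}" for v w
    using that nbhd_eq_if_card_uncovered_eq_0_or_d card_uncovered_eq_0_or_d lam
    unfolding nbhd_def by blast
qed (use edge_sym edge_irrefl in auto)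

end

theorem theorem2p2:
  fixes V :: "'a set" and E :: "'a \<Rightarrow> 'a \<Rightarrow> bool" and d :: nat and lam :: real
  assumes "d \<ge> 1"
    and "simple_graph V E"
    and "regular V E d"
    and "triangle_free V E"
    and "lam > 0"
  shows "occ V E lam / real (card V) \<le> occ (Kdd_vertices d) (Kdd_edge d) lam / (2 * real d)
       \<and> occ (Kdd_vertices d) (Kdd_edge d) lam / (2 * real d)
           = lam * (1 + lam) ^ (d - 1) / (2 * (1 + lam) ^ d - 1)
       \<and> (occ V E lam / real (card V) = occ (Kdd_vertices d) (Kdd_edge d) lam / (2 * real d)
           \<longrightarrow> disjoint_union_Kdd V E d)"
proof -
  note d = assms(1) and lam = assms(5)
  interpret triangle_free_regular_graph V E d
    using assms(2-4) by unfold_locales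
  define K where "K = lam * (1 + lam) ^ (d - 1) / (2 * (1 + lam) ^ d - 1)"
  define gap where "gap = (\<Sum>v\<in>V. local_gap lam v) / indep_poly V E lam"
  have K_pos: "K > 0"
    unfolding K_def using Kdd_occupancy_pos[OF lam] .
  have P_pos: "indep_poly V E lam > 0" using indep_poly_pos[OF assms(2) lam] .
  have "gap \<ge> 0"
    unfolding gap_def using P_pos local_gap_nonneg lam by (simp add: sum_nonneg)
  have occ: "occ V E lam / real (card V) = K - K * gap / real (card V)" if "card V \<noteq> 0"
    using occ_eq_Kdd_bound_minus_gap[OF lam d] that unfolding K_def[symmetric] gap_def[symmetric]
    by (simp add: field_simps)
  have "occ V E lam / real (card V) \<le> K"
    using occ K_pos \<open>gap \<ge> 0\<close> by (cases "card V = 0") auto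
  moreover have "disjoint_union_Kdd V E d" if "occ V E lam / real (card V) = K"
  proof (rule disjoint_union_Kdd_if_gap_eq_0[OF lam d])
    have "card V \<noteq> 0"
    proof
      assume "card V = 0"
      with that K_pos show False by simp
    qed
    then have "gap = 0" using that occ K_pos by simp
    then show "(\<Sum>v\<in>V. local_gap lam v) = 0" unfolding gap_def using P_pos by simp
  qed
  ultimately show ?thesis
    using occ_Kdd[OF d, of lam] unfolding K_def by auto
qed

end
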